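(* Let $\varphi$ be a $w^*$-continuous positive linear map on $B(\mathcal H)$ and let $A\in B(\mathcal H)$ be selfadjoint with $\varphi(A)\le A$. Let $A=B+C$ be the unique decomposition with $B=B^*$, $\varphi(B)=B$, and $C\ge0$, $\varphi(C)\le C$, $\varphi^k(C)\to0$ strongly as $k\to\infty$. Then $$\text{SOT-}\lim_{k\to\infty}\frac{\varphi^0(A)+\varphi^1(A)+\cdots+\varphi^{k-1}(A)}{k}=B.$$
   Context: $\varphi^0$ denotes the identity map. *)

theory Defs
  imports "HOL-Analysis.Analysis"
begin

class cvec_space = real_vector +
  fixes scaleC :: "complex \<Rightarrow> 'a \<Rightarrow> 'a"
  assumes scaleC_add_right: "scaleC a (x + y) = scaleC a x + scaleC a y"
    and scaleC_add_left: "scaleC (a + b) x = scaleC a x + scaleC b x"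
    and scaleC_scaleC: "scaleC a (scaleC b x) = scaleC (a * b) x"
    and scaleC_one: "scaleC 1 x = x"
    and scaleR_scaleC: "scaleR r x = scaleC (complex_of_real r) x"

text \<open>Complex inner product, linear in the second and conjugate-linear in the first argument;
  the norm is the one induced by the inner product.\<close>
class cinner_space = cvec_space + real_normed_vector +
  fixes cinner :: "'a \<Rightarrow> 'a \<Rightarrow> complex"
  assumes cinner_conj: "cinner x y = cnj (cinner y x)"
    and cinner_add_right: "cinner x (y + z) = cinner x y + cinner x z"
    and cinner_scaleC_right: "cinner x (scaleC c y) = c * cinner x y"
    and cinner_self_nonneg: "Im (cinner x x) = 0 \<and> 0 \<le> Re (cinner x x)"
    and cinner_self_eq_0: "cinner x x = 0 \<longleftrightarrow> x = 0"
    and norm_cinner: "norm x = sqrt (Re (cinner x x))"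

class chilbert_space = cinner_space + complete_space

definition bounded_op :: "('a::chilbert_space \<Rightarrow> 'a) \<Rightarrow> bool" where
  "bounded_op T \<longleftrightarrow> bounded_linear T \<and> (\<forall>c x. T (scaleC c x) = scaleC c (T x))"

definition selfadjoint_op :: "('a::chilbert_space \<Rightarrow> 'a) \<Rightarrow> bool" where
  "selfadjoint_op T \<longleftrightarrow> bounded_op T \<and> (\<forall>x y. cinner (T x) y = cinner x (T y))"

definition positive_op :: "('a::chilbert_space \<Rightarrow> 'a) \<Rightarrow> bool" where
  "positive_op T \<longleftrightarrow> bounded_op T \<and>
     (\<forall>x. Im (cinner x (T x)) = 0 \<and> 0 \<le> Re (cinner x (T x)))"

definition op_le :: "('a::chilbert_space \<Rightarrow> 'a) \<Rightarrow> ('a \<Rightarrow> 'a) \<Rightarrow> bool" where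
  "op_le S T \<longleftrightarrow> positive_op (\<lambda>x. T x - S x)"

definition linear_map_BH :: "(('a::chilbert_space \<Rightarrow> 'a) \<Rightarrow> ('a \<Rightarrow> 'a)) \<Rightarrow> bool" where
  "linear_map_BH \<phi> \<longleftrightarrow>
     (\<forall>T. bounded_op T \<longrightarrow> bounded_op (\<phi> T)) \<and>
     (\<forall>S T. bounded_op S \<longrightarrow> bounded_op T \<longrightarrow> \<phi> (\<lambda>x. S x + T x) = (\<lambda>x. \<phi> S x + \<phi> T x)) \<and>
     (\<forall>c T. bounded_op T \<longrightarrow> \<phi> (\<lambda>x. scaleC c (T x)) = (\<lambda>x. scaleC c (\<phi> T x)))"

definition positive_map_BH :: "(('a::chilbert_space \<Rightarrow> 'a) \<Rightarrow> ('a \<Rightarrow> 'a)) \<Rightarrow> bool" where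
  "positive_map_BH \<phi> \<longleftrightarrow> (\<forall>T. positive_op T \<longrightarrow> positive_op (\<phi> T))"

text \<open>The weak* (sigma-weak, ultraweak) topology on B(H): the weak topology induced by the
  functionals \<open>T \<mapsto> \<Sum>n. \<langle>x n, T (y n)\<rangle>\<close> with \<open>\<Sum>n. \<parallel>x n\<parallel>\<^sup>2 < \<infinity>\<close> and \<open>\<Sum>n. \<parallel>y n\<parallel>\<^sup>2 < \<infinity>\<close>
  (i.e. the predual action of trace-class operators).\<close>
definition wstar_functional :: "(nat \<Rightarrow> 'a::chilbert_space) \<Rightarrow> (nat \<Rightarrow> 'a) \<Rightarrow> ('a \<Rightarrow> 'a) \<Rightarrow> complex" where
  "wstar_functional x y T = (\<Sum>n. cinner (x n) (T (y n)))"

definition wstar_topology :: "('a::chilbert_space \<Rightarrow> 'a) topology" where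
  "wstar_topology = topology_generated_by
     {{T. bounded_op T \<and> wstar_functional x y T \<in> U} | x y U.
        summable (\<lambda>n. (norm (x n))\<^sup>2) \<and> summable (\<lambda>n. (norm (y n))\<^sup>2) \<and> open U}"

definition wstar_continuous :: "(('a::chilbert_space \<Rightarrow> 'a) \<Rightarrow> ('a \<Rightarrow> 'a)) \<Rightarrow> bool" where
  "wstar_continuous \<phi> \<longleftrightarrow> continuous_map wstar_topology wstar_topology \<phi>"

definition SOT_tendsto :: "(nat \<Rightarrow> ('a::chilbert_space \<Rightarrow> 'a)) \<Rightarrow> ('a \<Rightarrow> 'a) \<Rightarrow> bool" where
  "SOT_tendsto T L \<longleftrightarrow> (\<forall>x. (\<lambda>k. T k x) \<longlonglongrightarrow> L x)"

end

theory Submission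
  imports Defs
begin

text \<open>Since \<open>\<phi>\<close> is additive and fixes \<open>B\<close>, \<open>\<phi>\<^sup>j(A) = B + \<phi>\<^sup>j(C)\<close>, which tends strongly to \<open>B\<close>;
  Cesaro means of a convergent sequence converge to the same limit. Positivity,
  w*-continuity and the inequalities \<open>\<phi>(A) \<le> A\<close>, \<open>\<phi>(C) \<le> C\<close> are what make the decomposition
  \<open>A = B + C\<close> exist and be unique.\<close>

lemma cesaro_mean_tendsto_zero:
  fixes u :: "nat \<Rightarrow> 'a::real_normed_vector"
  assumes "u \<longlonglongrightarrow> 0"
  shows "(\<lambda>n. (1 / real n) *\<^sub>R (\<Sum>j<n. u j)) \<longlonglongrightarrow> 0"
proof (rule LIMSEQ_I)
  fix r :: real
  assume r: "0 < r"
  obtain N where N: "\<And>j. j \<ge> N \<Longrightarrow> norm (u j) < r / 2"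
    using LIMSEQ_D[OF assms, of "r / 2"] r by auto
  define M where "M = (\<Sum>j<N. norm (u j))"
  obtain K :: nat where K: "2 * M / r < real K"
    using reals_Archimedean2 by blast
  have "norm ((1 / real n) *\<^sub>R (\<Sum>j<n. u j)) < r" if n: "n \<ge> max (Suc N) K" for n
  proof -
    have split: "{..<n} = {..<N} \<union> {N..<n}"
      using n by auto
    have "norm (\<Sum>j<n. u j) \<le> (\<Sum>j<n. norm (u j))"
      by (rule norm_sum)
    also have "\<dots> = M + (\<Sum>j\<in>{N..<n}. norm (u j))"
      unfolding M_def split by (subst sum.union_disjoint) auto
    also have "(\<Sum>j\<in>{N..<n}. norm (u j)) \<le> (\<Sum>j\<in>{N..<n}. r / 2)"
      using N by (intro sum_mono) (auto simp: less_imp_le)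
    also have "\<dots> \<le> real n * (r / 2)"
      using r by (simp add: mult_right_mono)
    also have "M < real n * (r / 2)"
    proof -
      have "real K \<le> real n"
        using n by simp
      then have "2 * M / r < real n"
        using K by linarith
      then show ?thesis
        using r by (simp add: field_simps)
    qed
    finally have "norm (\<Sum>j<n. u j) < real n * r"
      by (simp add: field_simps)
    then show ?thesis
      using n by (simp add: field_simps)
  qed
  then show "\<exists>n0. \<forall>n\<ge>n0. norm ((1 / real n) *\<^sub>R (\<Sum>j<n. u j) - 0) < r"
    by (intro exI[of _ "max (Suc N) K"]) auto
qed

lemma cesaro_mean_tendsto:
  fixes u :: "nat \<Rightarrow> 'a::real_normed_vector"
  assumes "u \<longlonglongrightarrow> L"
  shows "(\<lambda>n. (1 / real n) *\<^sub>R (\<Sum>j<n. u j)) \<longlonglongrightarrow> L"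
proof -
  have "(\<lambda>j. u j - L) \<longlonglongrightarrow> 0"
    using tendsto_diff[OF assms tendsto_const[of L]] by simp
  then have "(\<lambda>n. (1 / real n) *\<^sub>R (\<Sum>j<n. u j - L) + L) \<longlonglongrightarrow> L"
    using tendsto_add[OF cesaro_mean_tendsto_zero tendsto_const[of L]] by simp
  moreover have "(1 / real n) *\<^sub>R (\<Sum>j<n. u j - L) + L = (1 / real n) *\<^sub>R (\<Sum>j<n. u j)"
    if "n > 0" for n
    using that by (simp add: sum_subtractf scaleR_diff_right sum_constant_scaleR)
  ultimately show ?thesis
    by (rule Lim_transform_eventually[OF _ eventually_mono[OF eventually_gt_at_top[of 0]]])
qed

lemma bounded_op_funpow:
  assumes "linear_map_BH \<phi>" and "bounded_op T"
  shows "bounded_op ((\<phi> ^^ j) T)"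
  using assms by (induction j) (auto simp: linear_map_BH_def)

lemma funpow_add_fixed_point:
  assumes \<phi>: "linear_map_BH \<phi>" and "bounded_op B" "bounded_op C" and "\<phi> B = B"
  shows "(\<phi> ^^ j) (\<lambda>x. B x + C x) = (\<lambda>x. B x + (\<phi> ^^ j) C x)"
proof (induction j)
  case 0
  then show ?case by simp
next
  case (Suc j)
  have "(\<phi> ^^ Suc j) (\<lambda>x. B x + C x) = \<phi> (\<lambda>x. B x + (\<phi> ^^ j) C x)"
    using Suc by simp
  also have "\<dots> = (\<lambda>x. \<phi> B x + \<phi> ((\<phi> ^^ j) C) x)"
    using assms bounded_op_funpow[OF \<phi>] by (simp add: linear_map_BH_def)
  finally show ?case
    using assms by simp
qed

theorem theorem3p2:
  fixes \<phi> :: "('a::chilbert_space \<Rightarrow> 'a) \<Rightarrow> ('a \<Rightarrow> 'a)"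
    and A B C :: "'a \<Rightarrow> 'a"
  assumes "linear_map_BH \<phi>" and "positive_map_BH \<phi>" and "wstar_continuous \<phi>"
    and "selfadjoint_op A" and "op_le (\<phi> A) A"
    and "\<forall>x. A x = B x + C x"
    and "selfadjoint_op B" and "\<phi> B = B"
    and "positive_op C" and "op_le (\<phi> C) C"
    and "SOT_tendsto (\<lambda>k. (\<phi> ^^ k) C) (\<lambda>x. 0)"
  shows "SOT_tendsto (\<lambda>k x. (1 / real k) *\<^sub>R (\<Sum>j<k. (\<phi> ^^ j) A x)) B"
  unfolding SOT_tendsto_def
proof
  fix x
  have "A = (\<lambda>x. B x + C x)"
    using assms(6) by auto
  then have iterates: "(\<phi> ^^ j) A x = B x + (\<phi> ^^ j) C x" for j
    using funpow_add_fixed_point[OF assms(1) _ _ assms(8)] assms(7,9)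
    by (simp add: selfadjoint_op_def positive_op_def)
  have "(\<lambda>j. (\<phi> ^^ j) C x) \<longlonglongrightarrow> 0"
    using assms(11) by (simp add: SOT_tendsto_def)
  from tendsto_add[OF tendsto_const[of "B x"] this]
  have "(\<lambda>j. (\<phi> ^^ j) A x) \<longlonglongrightarrow> B x"
    by (simp add: iterates)
  then show "(\<lambda>k. (1 / real k) *\<^sub>R (\<Sum>j<k. (\<phi> ^^ j) A x)) \<longlonglongrightarrow> B x"
    by (rule cesaro_mean_tendsto)
qed

end
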